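(* Consider the problem, assumptions and the algorithm DProxSGT described in the context. Then for every $t\ge1$, $$\mathbb{E}\big[\|\mathbf{X}_\perp^t\|^2\big]\le\frac{1+\rho^2}{2}\mathbb{E}\big[\|\mathbf{X}_\perp^{t-1}\|^2\big]+\frac{2\rho^2\eta^2}{1-\rho^2}\mathbb{E}\big[\|\mathbf{Y}_\perp^{t-1}\|^2\big].$$
   Context: Problem: $n\ge1$ workers, $d\ge1$. For each $i$, $\mathcal{D}_i$ is a distribution, $F_i(\cdot,\xi):\mathbb{R}^d\to\mathbb{R}$, $f_i(\mathbf{x})=\mathbb{E}_{\xi_i\sim\mathcal{D}_i}[F_i(\mathbf{x},\xi_i)]$, $f=\frac1n\sum_if_i$, $\phi=f+r$. Assumptions: $r$ is closed convex; each $f_i$ is $L$-smooth on $\mathrm{dom}(r)$; $\min\phi>-\infty$. Mixing matrix $\mathbf{W}\in\mathbb{R}^{n\times n}$ on a connected graph: doubly stochastic, $\mathbf{W}_{ij}=0$ if $i\ne j$ are not neighbors, $\mathrm{Null}(\mathbf{W}-\mathbf{I})=\mathrm{span}\{\mathbf{1}\}$, $\rho:=\|\mathbf{W}-\mathbf{J}\|_2<1$ with $\mathbf{J}=\mathbf{1}\mathbf{1}^\top/n$. Stochastic gradients: samples $\{\xi_i^t\}$ independent; for all $i$ and $\mathbf{x}\in\mathrm{dom}(r)$, $\mathbb{E}_{\xi_i}[\nabla F_i(\mathbf{x},\xi_i)]=\nabla f_i(\mathbf{x})$ and $\mathbb{E}_{\xi_i}\|\nabla F_i(\mathbf{x},\xi_i)-\nabla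 f_i(\mathbf{x})\|^2\le\sigma^2$. Algorithm DProxSGT with step size $\eta>0$: initialize $\mathbf{x}_i^0$, $\mathbf{y}_i^{-1}=\mathbf{0}$, $\nabla F_i(\mathbf{x}_i^{-1},\xi_i^{-1})=\mathbf{0}$. For $t=0,1,\dots$, node $i$ draws $\xi_i^t\sim\mathcal{D}_i$ and sets $\mathbf{y}_i^{t-1/2}=\mathbf{y}_i^{t-1}+\nabla F_i(\mathbf{x}_i^t,\xi_i^t)-\nabla F_i(\mathbf{x}_i^{t-1},\xi_i^{t-1})$, $\mathbf{y}_i^t=\sum_j\mathbf{W}_{ji}\mathbf{y}_j^{t-1/2}$, $\mathbf{x}_i^{t+1/2}=\mathrm{prox}_{\eta r}(\mathbf{x}_i^t-\eta\mathbf{y}_i^t)$ with $\mathrm{prox}_{\eta r}(\mathbf{z})=\arg\min_{\mathbf{u}}\{r(\mathbf{u})+\frac1{2\eta}\|\mathbf{u}-\mathbf{z}\|^2\}$, $\mathbf{x}_i^{t+1}=\sum_j\mathbf{W}_{ji}\mathbf{x}_j^{t+1/2}$. Notation: $\mathbf{X}^t=[\mathbf{x}_1^t,\dots,\mathbf{x}_n^t]$, $\mathbf{Y}^t=[\mathbf{y}_1^t,\dots,\mathbf{y}_n^t]$; $\|\cdot\|$ Frobenius norm; $\mathbf{X}_\perp=\mathbf{X}(\mathbf{I}-\mathbf{J})$; $\mathbb{E}$ full expectation. *)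

theory Defs
  imports "HOL-Probability.Probability"
begin

definition edom :: "('a::real_vector \<Rightarrow> ereal) \<Rightarrow> 'a set" where
  "edom r = {x. r x < \<infinity>}"

definition closed_proper_convex :: "('a::real_normed_vector \<Rightarrow> ereal) \<Rightarrow> bool" where
  "closed_proper_convex r \<longleftrightarrow>
     closed {(x, t::real). r x \<le> ereal t} \<and>
     convex {(x, t::real). r x \<le> ereal t} \<and>
     (\<forall>x. r x \<noteq> -\<infinity>) \<and> (\<exists>x. r x \<noteq> \<infinity>)"

definition prox :: "real \<Rightarrow> ('a::real_normed_vector \<Rightarrow> ereal) \<Rightarrow> 'a \<Rightarrow> 'a" where
  "prox \<eta> r z = (ARG_MIN (\<lambda>u. r u + ereal (norm (u - z)^2 / (2 * \<eta>))) u. True)"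

text \<open>State after t steps: (X^t, Y^(t-1), G^(t-1)) where G^(t-1)_i = grad F_i(x_i^(t-1), xi_i^(t-1)).
  Initially Y^(-1) = 0 and G^(-1) = 0.  The sample path is xi t i = xi_i^t.\<close>
fun dpsgt_state ::
  "real^'n^'n \<Rightarrow> real \<Rightarrow> (real^'d \<Rightarrow> ereal) \<Rightarrow> ('n \<Rightarrow> real^'d \<Rightarrow> 's \<Rightarrow> real^'d)
   \<Rightarrow> ('n::finite \<Rightarrow> real^'d) \<Rightarrow> (nat \<Rightarrow> 'n \<Rightarrow> 's) \<Rightarrow> nat
   \<Rightarrow> ('n \<Rightarrow> real^'d) \<times> ('n \<Rightarrow> real^'d) \<times> ('n \<Rightarrow> real^'d)" where
  "dpsgt_state W \<eta> r gF x0 xi 0 = (x0, (\<lambda>i. 0), (\<lambda>i. 0))"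
| "dpsgt_state W \<eta> r gF x0 xi (Suc t) =
     (let (X, Yp, Gp) = dpsgt_state W \<eta> r gF x0 xi t;
          G  = (\<lambda>i. gF i (X i) (xi t i));
          Yh = (\<lambda>i. Yp i + G i - Gp i);
          Y  = (\<lambda>i. \<Sum>j\<in>UNIV. W $ j $ i *\<^sub>R Yh j);
          Xh = (\<lambda>i. prox \<eta> r (X i - \<eta> *\<^sub>R Y i));
          X' = (\<lambda>i. \<Sum>j\<in>UNIV. W $ j $ i *\<^sub>R Xh j)
      in (X', Y, G))"

definition dpsgt_X where
  "dpsgt_X W \<eta> r gF x0 xi t = fst (dpsgt_state W \<eta> r gF x0 xi t)"

text \<open>Y^t (columns y_i^t), computed in iteration t.\<close>
definition dpsgt_Y where
  "dpsgt_Y W \<eta> r gF x0 xi t = fst (snd (dpsgt_state W \<eta> r gF x0 xi (Suc t)))"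

text \<open>Squared Frobenius norm of X_perp = X (I - J): sum_i ||x_i - mean||^2.\<close>
definition perp_sq :: "('n::finite \<Rightarrow> 'a::real_normed_vector) \<Rightarrow> real" where
  "perp_sq X = (\<Sum>i\<in>UNIV. (norm (X i - (1 / real CARD('n)) *\<^sub>R (\<Sum>j\<in>UNIV. X j)))\<^sup>2)"

definition Jmat :: "real^'n^'n" where
  "Jmat = (\<chi> i j. 1 / real CARD('n::finite))"

end

theory Submission
  imports Defs
begin

(* One step maps X to (prox (X - eta Y)) W, the proximal map applied columnwise.  Since the
   columns of W sum to one, (X W)_perp = X_perp (W - J), so the gossip step contracts the
   consensus error by rho^2.  The proximal map of a closed proper convex function is
   nonexpansive, and since the mean minimises the sum of squared deviations, applying it
   columnwise does not increase the consensus error.  Young's inequality with weight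
   alpha = (1 - rho^2) / (2 rho^2) splits the error of X - eta Y.  The resulting bound holds
   for every sample path, and integrating it gives the claim. *)

lemma le_max_one_if_square_le_linear:
  fixes x c d :: real
  assumes "x\<^sup>2 \<le> c + d * x"
  shows "x \<le> max 1 (\<bar>c\<bar> + d)"
proof (cases "x \<le> 1")
  case False
  then have "x * x \<le> (\<bar>c\<bar> + d) * x"
    using assms by (simp add: power2_eq_square algebra_simps) (smt (verit) mult_le_cancel_right1)
  then show ?thesis using False by simp
qed simp

lemma power2_norm_add:
  fixes a b :: "'a::real_inner"
  shows "(norm (a + b))\<^sup>2 = (norm a)\<^sup>2 + 2 * inner a b + (norm b)\<^sup>2"
  unfolding power2_norm_eq_inner by (simp add: inner_add_left inner_add_right inner_commute)

lemma power2_norm_add_le_weighted: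
  fixes a b :: "'a::real_normed_vector"
  assumes "\<alpha> > 0"
  shows "(norm (a + b))\<^sup>2 \<le> (1 + \<alpha>) * (norm a)\<^sup>2 + (1 + 1 / \<alpha>) * (norm b)\<^sup>2"
proof -
  define x y where "x = norm a" and "y = norm b"
  have "(norm (a + b))\<^sup>2 \<le> (x + y)\<^sup>2"
    unfolding x_def y_def by (intro power_mono norm_triangle_ineq) simp
  also have "\<dots> \<le> (1 + \<alpha>) * x\<^sup>2 + (1 + 1 / \<alpha>) * y\<^sup>2"
  proof -
    have "2 * x * y * \<alpha> \<le> \<alpha> * \<alpha> * x\<^sup>2 + y\<^sup>2"
      using zero_le_power2[of "\<alpha> * x - y"] by (simp add: power2_eq_square algebra_simps)
    then have "2 * x * y \<le> \<alpha> * x\<^sup>2 + y\<^sup>2 / \<alpha>"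
      using assms by (simp add: field_simps power2_eq_square)
    then show ?thesis by (simp add: power2_eq_square algebra_simps add_divide_distrib)
  qed
  finally show ?thesis unfolding x_def y_def .
qed

lemma power2_norm_vec_eq_sum: "(norm (x :: real^'k::finite))\<^sup>2 = (\<Sum>k\<in>UNIV. (x $ k)\<^sup>2)"
  unfolding power2_norm_eq_inner inner_vec_def by (simp add: power2_eq_square)

lemma norm_vector_matrix_mult_le:
  fixes B :: "real^'n::finite^'m::finite"
  shows "norm (v v* B) \<le> onorm ((*v) B) * norm v"
proof -
  have "(norm (v v* B))\<^sup>2 = inner v (B *v (v v* B))"
    unfolding power2_norm_eq_inner dot_lmul_matrix ..
  also have "\<dots> \<le> norm v * norm (B *v (v v* B))" by (rule norm_cauchy_schwarz)
  also have "\<dots> \<le> norm v * (onorm ((*v) B) * norm (v v* B))"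
    using onorm[OF matrix_vector_mul_bounded_linear] by (intro mult_left_mono) auto
  finally have "norm (v v* B) * norm (v v* B) \<le> (onorm ((*v) B) * norm v) * norm (v v* B)"
    by (simp add: power2_eq_square algebra_simps)
  then show ?thesis by (cases "norm (v v* B) = 0") (auto simp: onorm_pos_le)
qed

lemma nn_integral_le_linear_combination:
  assumes "f \<in> borel_measurable M" "g \<in> borel_measurable M"
    and "\<And>\<omega>. 0 \<le> f \<omega>" "\<And>\<omega>. 0 \<le> g \<omega>" "0 \<le> a" "0 \<le> b"
    and "\<And>\<omega>. h \<omega> \<le> a * f \<omega> + b * g \<omega>"
  shows "(\<integral>\<^sup>+\<omega>. ennreal (h \<omega>) \<partial>M)
    \<le> ennreal a * (\<integral>\<^sup>+\<omega>. ennreal (f \<omega>) \<partial>M) + ennreal b * (\<integral>\<^sup>+\<omega>. ennreal (g \<omega>) \<partial>M)"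
proof -
  have "(\<integral>\<^sup>+\<omega>. ennreal (h \<omega>) \<partial>M) \<le> (\<integral>\<^sup>+\<omega>. ennreal a * ennreal (f \<omega>) + ennreal b * ennreal (g \<omega>) \<partial>M)"
  proof (rule nn_integral_mono)
    fix \<omega>
    have "ennreal (h \<omega>) \<le> ennreal (a * f \<omega> + b * g \<omega>)" by (rule ennreal_leI) (rule assms)
    also have "\<dots> = ennreal a * ennreal (f \<omega>) + ennreal b * ennreal (g \<omega>)"
      using assms by (simp add: ennreal_plus ennreal_mult)
    finally show "ennreal (h \<omega>) \<le> ennreal a * ennreal (f \<omega>) + ennreal b * ennreal (g \<omega>)" .
  qed
  also have "\<dots> = ennreal a * (\<integral>\<^sup>+\<omega>. ennreal (f \<omega>) \<partial>M) + ennreal b * (\<integral>\<^sup>+\<omega>. ennreal (g \<omega>) \<partial>M)"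
    using assms by (simp add: nn_integral_add nn_integral_cmult)
  finally show ?thesis .
qed

section \<open>Proximal operator of a closed proper convex function\<close>

lemma closed_proper_convex_affine_minorant:
  fixes r :: "'a::euclidean_space \<Rightarrow> ereal"
  assumes "closed_proper_convex r"
  obtains a b where "\<And>x. ereal (inner a x + b) \<le> r x"
proof -
  let ?S = "{(x, t::real). r x \<le> ereal t}"
  from assms have cl: "closed ?S" and cv: "convex ?S" and nm: "\<And>x. r x \<noteq> -\<infinity>"
    and ex: "\<exists>x. r x \<noteq> \<infinity>" unfolding closed_proper_convex_def by auto
  obtain x0 v0 where v0: "r x0 = ereal v0" using ex nm by (metis ereal_cases)
  have "(x0, v0 - 1) \<notin> ?S" using v0 by auto
  then obtain a b where ab: "inner a (x0, v0 - 1) < b" "\<forall>z\<in>?S. inner a z > b"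
    using separating_hyperplane_closed_point[OF cv cl] by blast
  obtain a1 a2 where a: "a = (a1, a2)" by (cases a)
  have "(x0, v0) \<in> ?S" using v0 by auto
  with ab a have "inner a1 x0 + a2 * v0 > b" "inner a1 x0 + a2 * (v0 - 1) < b" by auto
  then have a2: "a2 > 0" by (simp add: algebra_simps)
  have "ereal (inner (- (1 / a2) *\<^sub>R a1) x + b / a2) \<le> r x" for x
  proof (cases "r x")
    case (real v)
    with ab a have "inner a1 x + a2 * v > b" by auto
    then have "inner (- (1 / a2) *\<^sub>R a1) x + b / a2 \<le> v" using a2 by (simp add: field_simps)
    then show ?thesis using real by simp
  qed (use nm in auto)
  then show thesis by (rule that)
qed

lemma prox_objective_has_minimizer:
  fixes r :: "'a::euclidean_space \<Rightarrow> ereal"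
  assumes cpc: "closed_proper_convex r" and eta: "\<eta> > 0"
  obtains p where
    "\<And>u. r p + ereal (norm (p - z)^2 / (2 * \<eta>)) \<le> r u + ereal (norm (u - z)^2 / (2 * \<eta>))"
proof -
  let ?S = "{(x, t::real). r x \<le> ereal t}"
  define q where "q u = norm (u - z)^2 / (2 * \<eta>)" for u
  define h where "h = (\<lambda>(u, t). t + q u)"
  from cpc have cl: "closed ?S" and nm: "\<And>x. r x \<noteq> -\<infinity>" and ex: "\<exists>x. r x \<noteq> \<infinity>"
    unfolding closed_proper_convex_def by auto
  obtain a b where ab: "\<And>x. ereal (inner a x + b) \<le> r x"
    using closed_proper_convex_affine_minorant[OF cpc] by blast
  obtain x1 v1 where v1: "r x1 = ereal v1" using ex nm by (metis ereal_cases)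
  define m where "m = v1 + q x1"
  \<comment> \<open>Minimise \<open>h\<close> over the part of the epigraph of \<open>r\<close> below level \<open>m\<close>; the affine
    minorant makes that set bounded.\<close>
  define K where "K = ?S \<inter> {p. h p \<le> m}"
  have hc: "continuous_on UNIV h" unfolding h_def q_def case_prod_beta
    by (intro continuous_intros) (use eta in auto)
  define R where "R = max 1 (\<bar>2 * \<eta> * (m - b + norm a * norm z)\<bar> + 2 * \<eta> * norm a)"
  define lo where "lo = b - norm a * (R + norm z)"
  have K_bound: "(u, t) \<in> cball z R \<times> {lo..m}" if "(u, t) \<in> K" for u t
  proof -
    from that have rt: "r u \<le> ereal t" and ht: "t + q u \<le> m" unfolding K_def h_def by auto
    have lb: "inner a u + b \<le> t" using ab[of u] rt by (metis ereal_less_eq(3) order.trans)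
    have ua: "- inner a u \<le> norm a * norm (u - z) + norm a * norm z"
    proof -
      have "- inner a u = - inner a (u - z) - inner a z" by (simp add: inner_diff_right)
      also have "\<dots> \<le> norm a * norm (u - z) + norm a * norm z"
        using Cauchy_Schwarz_ineq2[of a "u - z"] Cauchy_Schwarz_ineq2[of a z] by linarith
      finally show ?thesis .
    qed
    have "norm (u - z)^2 = 2 * \<eta> * q u" unfolding q_def using eta by simp
    also have "\<dots> \<le> 2 * \<eta> * (m - b + norm a * norm z + norm a * norm (u - z))"
      using ht lb ua eta by (intro mult_left_mono) auto
    finally have "norm (u - z) \<le> R" unfolding R_def
      by (intro le_max_one_if_square_le_linear) (simp add: algebra_simps)
    moreover have "t \<le> m" using ht eta unfolding q_def
      by (smt (verit) divide_nonneg_pos zero_le_power2)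
    moreover have "lo \<le> t"
    proof -
      have "norm a * norm (u - z) \<le> norm a * R" using \<open>norm (u - z) \<le> R\<close> by (simp add: mult_left_mono)
      then show ?thesis unfolding lo_def using lb ua by (simp add: distrib_left)
    qed
    ultimately show ?thesis by (simp add: dist_norm norm_minus_commute[of z])
  qed
  have "compact K"
  proof -
    have "closed K" unfolding K_def
      by (intro closed_Int cl closed_Collect_le continuous_on_const) (use hc in auto)
    moreover have "compact (cball z R \<times> {lo..m})" by (intro compact_Times) auto
    ultimately have "compact ((cball z R \<times> {lo..m}) \<inter> K)" by (intro compact_Int_closed)
    moreover have "K \<subseteq> cball z R \<times> {lo..m}" using K_bound by auto
    ultimately show ?thesis by (simp add: Int_absorb1)
  qed
  moreover have "(x1, v1) \<in> K" unfolding K_def h_def m_def using v1 by simp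
  moreover have "continuous_on K h" using hc by (rule continuous_on_subset) simp
  ultimately obtain y where "y \<in> K" and "\<forall>y'\<in>K. h y \<le> h y'"
    using continuous_attains_inf[of K h] by blast
  moreover obtain p tp where "y = (p, tp)" by (cases y)
  ultimately have p: "(p, tp) \<in> K" and p_min: "\<And>y'. y' \<in> K \<Longrightarrow> h (p, tp) \<le> h y'" by auto
  have rp: "r p \<le> ereal tp" and hp: "tp + q p \<le> m" using p unfolding K_def h_def by auto
  have "r p + ereal (q p) \<le> r u + ereal (q u)" for u
  proof (cases "r u")
    case (real v)
    have "tp + q p \<le> v + q u"
    proof (cases "v + q u \<le> m")
      case True
      then have "(u, v) \<in> K" unfolding K_def h_def using real by simp
      from p_min[OF this] show ?thesis unfolding h_def by simp
    qed (use hp in simp)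
    then have "ereal (tp + q p) \<le> r u + ereal (q u)" using real by simp
    then show ?thesis using add_right_mono[OF rp, of "ereal (q p)"] by simp
  qed (use nm in auto)
  then show thesis unfolding q_def by (rule that)
qed

lemma prox_minimizes:
  fixes r :: "'a::euclidean_space \<Rightarrow> ereal"
  assumes "closed_proper_convex r" and "\<eta> > 0"
  shows "r (prox \<eta> r z) + ereal (norm (prox \<eta> r z - z)^2 / (2 * \<eta>))
           \<le> r u + ereal (norm (u - z)^2 / (2 * \<eta>))"
proof -
  define g where "g u = r u + ereal (norm (u - z)^2 / (2 * \<eta>))" for u
  obtain p where "\<And>u. g p \<le> g u"
    using prox_objective_has_minimizer[OF assms] unfolding g_def by blast
  then have "is_arg_min g (\<lambda>u. True) p" unfolding is_arg_min_def by (simp add: not_less)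
  then have "is_arg_min g (\<lambda>u. True) (prox \<eta> r z)"
    unfolding prox_def arg_min_def g_def[symmetric] by (rule someI)
  then show ?thesis unfolding is_arg_min_def g_def by (simp add: not_less)
qed

lemma prox_in_edom:
  fixes r :: "'a::euclidean_space \<Rightarrow> ereal"
  assumes cpc: "closed_proper_convex r" and "\<eta> > 0"
  shows "prox \<eta> r z \<in> edom r"
proof -
  obtain x where x: "r x \<noteq> \<infinity>" "r x \<noteq> -\<infinity>"
    using cpc unfolding closed_proper_convex_def by blast
  then have "r x + ereal (norm (x - z)^2 / (2 * \<eta>)) \<noteq> \<infinity>" by (cases "r x") auto
  then have "r (prox \<eta> r z) + ereal (norm (prox \<eta> r z - z)^2 / (2 * \<eta>)) \<noteq> \<infinity>"
    using prox_minimizes[OF assms, of z x] by auto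
  then show ?thesis unfolding edom_def by (cases "r (prox \<eta> r z)") auto
qed

text \<open>Compare the minimiser \<open>p\<close> with the point \<open>p + s (q - p)\<close> of the segment towards \<open>q\<close>;
  convexity of \<open>r\<close> bounds its value.\<close>
lemma prox_variational_ineq:
  fixes r :: "'a::euclidean_space \<Rightarrow> ereal"
  assumes cpc: "closed_proper_convex r" and eta: "\<eta> > 0"
    and p: "p = prox \<eta> r z" and rp: "r p = ereal P" and rq: "r q = ereal Q"
    and s: "0 < s" "s \<le> 1"
  shows "2 * \<eta> * (P - Q) \<le> 2 * inner (p - z) (q - p) + s * norm (q - p)^2"
proof -
  let ?S = "{(x, t::real). r x \<le> ereal t}"
  have "convex ?S" using cpc unfolding closed_proper_convex_def by auto
  moreover have "(p, P) \<in> ?S" "(q, Q) \<in> ?S" using rp rq by auto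
  ultimately have "((1 - s) *\<^sub>R p + s *\<^sub>R q, (1 - s) * P + s * Q) \<in> ?S"
    using s convexD[of ?S "(p, P)" "(q, Q)" "1 - s" s] by simp
  then have r_seg: "r (p + s *\<^sub>R (q - p)) \<le> ereal ((1 - s) * P + s * Q)"
    by (simp add: algebra_simps)
  have "ereal P + ereal (norm (p - z)^2 / (2 * \<eta>))
      \<le> r (p + s *\<^sub>R (q - p)) + ereal (norm (p + s *\<^sub>R (q - p) - z)^2 / (2 * \<eta>))"
    using prox_minimizes[OF cpc eta, of z "p + s *\<^sub>R (q - p)"] p rp by simp
  also have "\<dots> \<le> ereal ((1 - s) * P + s * Q) + ereal (norm (p + s *\<^sub>R (q - p) - z)^2 / (2 * \<eta>))"
    using r_seg by (rule add_right_mono)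
  finally have "P + norm (p - z)^2 / (2 * \<eta>)
      \<le> (1 - s) * P + s * Q + norm (p + s *\<^sub>R (q - p) - z)^2 / (2 * \<eta>)"
    by simp
  from mult_left_mono[OF this, of "2 * \<eta>"] eta
  have "2 * \<eta> * P + norm (p - z)^2
      \<le> 2 * \<eta> * ((1 - s) * P + s * Q) + norm (p + s *\<^sub>R (q - p) - z)^2"
    by (simp add: distrib_left)
  moreover have "norm (p + s *\<^sub>R (q - p) - z)^2
      = norm (p - z)^2 + 2 * s * inner (p - z) (q - p) + s^2 * norm (q - p)^2"
  proof -
    have "p + s *\<^sub>R (q - p) - z = (p - z) + s *\<^sub>R (q - p)" by (simp add: algebra_simps)
    then show ?thesis by (simp only: power2_norm_add) (simp add: power_mult_distrib)
  qed
  ultimately have "s * (2 * \<eta> * (P - Q)) \<le> s * (2 * inner (p - z) (q - p) + s * norm (q - p)^2)"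
    by (simp add: algebra_simps power2_eq_square)
  then show ?thesis using s by simp
qed

lemma prox_firmly_nonexpansive:
  fixes r :: "'a::euclidean_space \<Rightarrow> ereal"
  assumes cpc: "closed_proper_convex r" and eta: "\<eta> > 0"
  shows "norm (prox \<eta> r z - prox \<eta> r w)^2 \<le> inner (z - w) (prox \<eta> r z - prox \<eta> r w)"
proof -
  define p where "p = prox \<eta> r z"
  define q where "q = prox \<eta> r w"
  have nm: "\<And>x. r x \<noteq> -\<infinity>" using cpc unfolding closed_proper_convex_def by auto
  have "r p < \<infinity>" "r q < \<infinity>" using prox_in_edom[OF cpc eta] unfolding p_def q_def edom_def by auto
  then obtain P Q where rp: "r p = ereal P" and rq: "r q = ereal Q"
    using nm[of p] nm[of q] by (cases "r p"; cases "r q") auto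
  define N where "N = norm (p - q)^2"
  \<comment> \<open>Adding the two variational inequalities cancels \<open>P - Q\<close>; then let \<open>s \<rightarrow> 0\<close>.\<close>
  have "N - inner (z - w) (p - q) \<le> s * N" if s: "0 < s" "s \<le> 1" for s
  proof -
    have "2 * \<eta> * (P - Q) \<le> 2 * inner (p - z) (q - p) + s * N"
      using prox_variational_ineq[OF cpc eta p_def rp rq s] unfolding N_def
      by (simp add: norm_minus_commute)
    moreover have "2 * \<eta> * (Q - P) \<le> 2 * inner (q - w) (p - q) + s * N"
      using prox_variational_ineq[OF cpc eta q_def rq rp s] unfolding N_def .
    moreover have "inner (p - z) (q - p) + inner (q - w) (p - q) = inner (z - w) (p - q) - N"
      unfolding N_def power2_norm_eq_inner
      by (simp add: inner_diff_left inner_diff_right inner_commute)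
    ultimately show ?thesis by (simp add: algebra_simps)
  qed
  then have "\<forall>\<^sub>F s in at_right 0. N - inner (z - w) (p - q) \<le> s * N"
    unfolding eventually_at_right_field by (intro exI[of _ 1]) auto
  moreover have "((\<lambda>s. s * N) \<longlongrightarrow> 0) (at_right 0)"
    by (intro tendsto_mult_left_zero tendsto_ident_at)
  ultimately have "N - inner (z - w) (p - q) \<le> 0"
    by (intro tendsto_lowerbound) (auto simp: trivial_limit_at_right_real)
  then show ?thesis unfolding N_def p_def q_def by simp
qed

lemma prox_nonexpansive:
  fixes r :: "'a::euclidean_space \<Rightarrow> ereal"
  assumes "closed_proper_convex r" and "\<eta> > 0"
  shows "norm (prox \<eta> r z - prox \<eta> r w) \<le> norm (z - w)"
proof -
  let ?d = "norm (prox \<eta> r z - prox \<eta> r w)"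
  have "?d\<^sup>2 \<le> inner (z - w) (prox \<eta> r z - prox \<eta> r w)"
    by (rule prox_firmly_nonexpansive[OF assms])
  also have "\<dots> \<le> norm (z - w) * ?d" by (rule norm_cauchy_schwarz)
  finally have "?d * ?d \<le> norm (z - w) * ?d" by (simp add: power2_eq_square)
  then show ?thesis by (cases "?d = 0") auto
qed

lemma continuous_on_prox:
  fixes r :: "'a::euclidean_space \<Rightarrow> ereal"
  assumes "closed_proper_convex r" and "\<eta> > 0"
  shows "continuous_on UNIV (prox \<eta> r)"
  by (intro lipschitz_on_continuous_on[of 1] lipschitz_onI)
    (simp_all add: dist_norm prox_nonexpansive[OF assms])

section \<open>Consensus error and gossip steps\<close>

lemma perp_sq_nonneg: "0 \<le> perp_sq X"
  unfolding perp_sq_def by (simp add: sum_nonneg)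

lemma perp_sq_le_sum_sq_dist:
  fixes X :: "'n::finite \<Rightarrow> 'a::real_inner"
  shows "perp_sq X \<le> (\<Sum>i\<in>UNIV. (norm (X i - c))\<^sup>2)"
proof -
  define m where "m = (1 / real CARD('n)) *\<^sub>R (\<Sum>j\<in>UNIV. X j)"
  have deviations_sum_0: "(\<Sum>i\<in>UNIV. X i - m) = 0"
    unfolding m_def sum_subtractf by (simp add: sum_constant_scaleR)
  have "(\<Sum>i\<in>UNIV. (norm (X i - c))\<^sup>2)
      = (\<Sum>i\<in>UNIV. (norm (X i - m))\<^sup>2 + 2 * inner (X i - m) (m - c) + (norm (m - c))\<^sup>2)"
    using power2_norm_add[of "X _ - m" "m - c"] by simp
  also have "\<dots> = (\<Sum>i\<in>UNIV. (norm (X i - m))\<^sup>2) + 2 * inner (\<Sum>i\<in>UNIV. X i - m) (m - c)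
      + real CARD('n) * (norm (m - c))\<^sup>2"
    by (simp add: sum.distrib sum_distrib_left inner_sum_left)
  also have "\<dots> \<ge> (\<Sum>i\<in>UNIV. (norm (X i - m))\<^sup>2)" unfolding deviations_sum_0 by simp
  finally show ?thesis unfolding perp_sq_def m_def .
qed

lemma perp_sq_comp_nonexpansive_le:
  fixes X :: "'n::finite \<Rightarrow> 'a::real_inner" and P :: "'a \<Rightarrow> 'a"
  assumes "\<And>x y. norm (P x - P y) \<le> norm (x - y)"
  shows "perp_sq (\<lambda>i. P (X i)) \<le> perp_sq X"
proof -
  define m where "m = (1 / real CARD('n)) *\<^sub>R (\<Sum>j\<in>UNIV. X j)"
  have "perp_sq (\<lambda>i. P (X i)) \<le> (\<Sum>i\<in>UNIV. (norm (P (X i) - P m))\<^sup>2)"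
    by (rule perp_sq_le_sum_sq_dist)
  also have "\<dots> \<le> (\<Sum>i\<in>UNIV. (norm (X i - m))\<^sup>2)"
    by (intro sum_mono power_mono assms) auto
  finally show ?thesis unfolding perp_sq_def m_def .
qed

lemma perp_sq_diff_scaleR_le:
  fixes X Y :: "'n::finite \<Rightarrow> 'a::real_inner"
  assumes "\<alpha> > 0"
  shows "perp_sq (\<lambda>i. X i - \<eta> *\<^sub>R Y i) \<le> (1 + \<alpha>) * perp_sq X + (1 + 1 / \<alpha>) * \<eta>\<^sup>2 * perp_sq Y"
proof -
  define mX where "mX = (1 / real CARD('n)) *\<^sub>R (\<Sum>j\<in>UNIV. X j)"
  define mY where "mY = (1 / real CARD('n)) *\<^sub>R (\<Sum>j\<in>UNIV. Y j)"
  have "perp_sq (\<lambda>i. X i - \<eta> *\<^sub>R Y i)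
      \<le> (\<Sum>i\<in>UNIV. (norm ((X i - \<eta> *\<^sub>R Y i) - (mX - \<eta> *\<^sub>R mY)))\<^sup>2)"
    by (rule perp_sq_le_sum_sq_dist)
  also have "\<dots> = (\<Sum>i\<in>UNIV. (norm ((X i - mX) + - (\<eta> *\<^sub>R (Y i - mY))))\<^sup>2)"
    by (simp add: algebra_simps)
  also have "\<dots> \<le> (\<Sum>i\<in>UNIV. (1 + \<alpha>) * (norm (X i - mX))\<^sup>2 + (1 + 1 / \<alpha>) * \<eta>\<^sup>2 * (norm (Y i - mY))\<^sup>2)"
  proof (rule sum_mono)
    fix i
    show "(norm ((X i - mX) + - (\<eta> *\<^sub>R (Y i - mY))))\<^sup>2
        \<le> (1 + \<alpha>) * (norm (X i - mX))\<^sup>2 + (1 + 1 / \<alpha>) * \<eta>\<^sup>2 * (norm (Y i - mY))\<^sup>2"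
      using power2_norm_add_le_weighted[OF assms, of "X i - mX" "- (\<eta> *\<^sub>R (Y i - mY))"]
      by (simp add: power_mult_distrib)
  qed
  also have "\<dots> = (1 + \<alpha>) * perp_sq X + (1 + 1 / \<alpha>) * \<eta>\<^sup>2 * perp_sq Y"
    unfolding perp_sq_def mX_def mY_def by (simp add: sum.distrib sum_distrib_left)
  finally show ?thesis .
qed

lemma power2_mult_perp_sq_diff_scaleR_le:
  fixes X Y :: "'n::finite \<Rightarrow> 'a::real_inner"
  assumes "0 \<le> \<rho>" "\<rho> < 1"
  shows "\<rho>\<^sup>2 * perp_sq (\<lambda>j. X j - \<eta> *\<^sub>R Y j)
     \<le> (1 + \<rho>\<^sup>2) / 2 * perp_sq X + 2 * \<rho>\<^sup>2 * \<eta>\<^sup>2 / (1 - \<rho>\<^sup>2) * perp_sq Y"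
proof (cases "\<rho> = 0")
  case True
  then show ?thesis using perp_sq_nonneg[of X] by simp
next
  case False
  have rho2: "\<rho>\<^sup>2 < 1" using assms by (simp add: power_less_one_iff abs_of_nonneg)
  have rho2_pos: "\<rho>\<^sup>2 > 0" using False by simp
  \<comment> \<open>This weight turns \<open>\<rho>\<^sup>2 (1 + \<alpha>)\<close> into \<open>(1 + \<rho>\<^sup>2) / 2\<close>.\<close>
  define \<alpha> where "\<alpha> = (1 - \<rho>\<^sup>2) / (2 * \<rho>\<^sup>2)"
  have \<alpha>: "\<alpha> > 0" unfolding \<alpha>_def using rho2_pos rho2 by simp
  have "\<rho>\<^sup>2 * (1 + 1 / \<alpha>) = \<rho>\<^sup>2 * (1 + \<rho>\<^sup>2) / (1 - \<rho>\<^sup>2)"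
    unfolding \<alpha>_def using rho2_pos rho2 by (simp add: field_simps)
  also have "\<dots> \<le> 2 * \<rho>\<^sup>2 / (1 - \<rho>\<^sup>2)"
    using rho2_pos rho2 by (intro divide_right_mono) auto
  finally have coeff_Y: "\<rho>\<^sup>2 * (1 + 1 / \<alpha>) \<le> 2 * \<rho>\<^sup>2 / (1 - \<rho>\<^sup>2)" .
  have "\<rho>\<^sup>2 * perp_sq (\<lambda>j. X j - \<eta> *\<^sub>R Y j)
      \<le> \<rho>\<^sup>2 * ((1 + \<alpha>) * perp_sq X + (1 + 1 / \<alpha>) * \<eta>\<^sup>2 * perp_sq Y)"
    using perp_sq_diff_scaleR_le[OF \<alpha>] by (intro mult_left_mono) auto
  also have "\<dots> = (\<rho>\<^sup>2 * (1 + \<alpha>)) * perp_sq X + (\<rho>\<^sup>2 * (1 + 1 / \<alpha>)) * (\<eta>\<^sup>2 * perp_sq Y)"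
    by (simp add: algebra_simps)
  also have "\<rho>\<^sup>2 * (1 + \<alpha>) = (1 + \<rho>\<^sup>2) / 2"
    unfolding \<alpha>_def using rho2_pos by (simp add: field_simps)
  also have "\<rho>\<^sup>2 * (1 + 1 / \<alpha>) * (\<eta>\<^sup>2 * perp_sq Y) \<le> 2 * \<rho>\<^sup>2 / (1 - \<rho>\<^sup>2) * (\<eta>\<^sup>2 * perp_sq Y)"
    using coeff_Y perp_sq_nonneg[of Y] by (intro mult_right_mono) auto
  finally show ?thesis by (simp add: algebra_simps)
qed

lemma borel_measurable_perp_sq:
  fixes X :: "'w \<Rightarrow> 'n::finite \<Rightarrow> 'a::euclidean_space"
  assumes "\<And>i. (\<lambda>\<omega>. X \<omega> i) \<in> borel_measurable M"
  shows "(\<lambda>\<omega>. perp_sq (X \<omega>)) \<in> borel_measurable M"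
  unfolding perp_sq_def using assms by measurable

text \<open>With the \<open>x\<^sub>i\<close> as columns of a matrix \<open>X\<close>, \<open>mix W X\<close> is the gossip step \<open>X W\<close>.\<close>
definition mix :: "real^'n^'m \<Rightarrow> ('m::finite \<Rightarrow> 'a::real_vector) \<Rightarrow> 'n::finite \<Rightarrow> 'a" where
  "mix W X = (\<lambda>i. \<Sum>j\<in>UNIV. W $ j $ i *\<^sub>R X j)"

lemma sum_power2_norm_mix_le:
  fixes B :: "real^'n::finite^'m::finite" and e :: "'m \<Rightarrow> real^'d::finite"
  shows "(\<Sum>i\<in>UNIV. (norm (mix B e i))\<^sup>2) \<le> (onorm ((*v) B))\<^sup>2 * (\<Sum>j\<in>UNIV. (norm (e j))\<^sup>2)"
proof -
  \<comment> \<open>Coordinate \<open>k\<close> of \<open>mix B e\<close> is the row vector \<open>v k\<close> times \<open>B\<close>.\<close>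
  define v where "v k = (\<chi> j. e j $ k)" for k
  have coord: "mix B e i $ k = (v k v* B) $ i" for i k
    unfolding mix_def v_def vector_matrix_mult_def by (simp add: mult.commute)
  have "(\<Sum>i\<in>UNIV. (norm (mix B e i))\<^sup>2) = (\<Sum>k\<in>UNIV. (norm (v k v* B))\<^sup>2)"
    unfolding power2_norm_vec_eq_sum coord by (rule sum.swap)
  also have "\<dots> \<le> (\<Sum>k\<in>UNIV. (onorm ((*v) B))\<^sup>2 * (norm (v k))\<^sup>2)"
    by (intro sum_mono) (metis norm_vector_matrix_mult_le power_mono norm_ge_zero power_mult_distrib)
  also have "\<dots> = (onorm ((*v) B))\<^sup>2 * (\<Sum>j\<in>UNIV. (norm (e j))\<^sup>2)"
    unfolding sum_distrib_left[symmetric] power2_norm_vec_eq_sum v_def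
    by (simp add: sum.swap[of "\<lambda>k j. (e j $ k)\<^sup>2"])
  finally show ?thesis .
qed

text \<open>Column sums of \<open>W\<close> equal to one give \<open>X W - X J = (X - X J) (W - J)\<close>.\<close>
lemma perp_sq_mix_le:
  fixes W :: "real^'n::finite^'n" and X :: "'n \<Rightarrow> real^'d::finite"
  assumes W_cols: "\<And>j. (\<Sum>i\<in>UNIV. W $ i $ j) = 1"
  shows "perp_sq (mix W X) \<le> (onorm ((*v) (W - Jmat)))\<^sup>2 * perp_sq X"
proof -
  define m where "m = (1 / real CARD('n)) *\<^sub>R (\<Sum>j\<in>UNIV. X j)"
  have deviations_sum_0: "(\<Sum>j\<in>UNIV. X j - m) = 0"
    unfolding m_def sum_subtractf by (simp add: sum_constant_scaleR del: sum_constant)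
  have "mix W X i - m = mix (W - Jmat) (\<lambda>j. X j - m) i" for i
  proof -
    have "mix (W - Jmat) (\<lambda>j. X j - m) i
        = (\<Sum>j\<in>UNIV. W $ j $ i *\<^sub>R (X j - m)) - (1 / real CARD('n)) *\<^sub>R (\<Sum>j\<in>UNIV. X j - m)"
      unfolding mix_def Jmat_def
      by (simp add: scaleR_diff_left sum_subtractf scaleR_sum_right scaleR_diff_right del: sum_constant)
    also have "\<dots> = mix W X i - (\<Sum>j\<in>UNIV. W $ j $ i) *\<^sub>R m"
      unfolding deviations_sum_0 mix_def by (simp add: scaleR_diff_right sum_subtractf scaleR_sum_left)
    also have "\<dots> = mix W X i - m" using W_cols[of i] by simp
    finally show ?thesis by simp
  qed
  then have "perp_sq (mix W X) \<le> (\<Sum>i\<in>UNIV. (norm (mix (W - Jmat) (\<lambda>j. X j - m) i))\<^sup>2)"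
    using perp_sq_le_sum_sq_dist[of "mix W X" m] by simp
  also have "\<dots> \<le> (onorm ((*v) (W - Jmat)))\<^sup>2 * (\<Sum>j\<in>UNIV. (norm (X j - m))\<^sup>2)"
    by (rule sum_power2_norm_mix_le)
  finally show ?thesis unfolding perp_sq_def m_def .
qed

section \<open>The DProxSGT recursion\<close>

lemma dpsgt_state_Suc:
  "dpsgt_state W \<eta> r gF x0 xi (Suc t) =
    (let S = dpsgt_state W \<eta> r gF x0 xi t;
         G = (\<lambda>i. gF i (fst S i) (xi t i));
         Y = mix W (\<lambda>j. fst (snd S) j + G j - snd (snd S) j)
     in (mix W (\<lambda>j. prox \<eta> r (fst S j - \<eta> *\<^sub>R Y j)), Y, G))"
  by (cases "dpsgt_state W \<eta> r gF x0 xi t") (simp add: Let_def mix_def)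

lemma dpsgt_X_Suc:
  "dpsgt_X W \<eta> r gF x0 xi (Suc t) =
     mix W (\<lambda>j. prox \<eta> r (dpsgt_X W \<eta> r gF x0 xi t j - \<eta> *\<^sub>R dpsgt_Y W \<eta> r gF x0 xi t j))"
  unfolding dpsgt_X_def dpsgt_Y_def dpsgt_state_Suc by (simp add: Let_def)

lemma perp_sq_dpsgt_step_le:
  fixes W :: "real^'n::finite^'n" and X Y :: "'n \<Rightarrow> real^'d::finite"
  assumes cpc: "closed_proper_convex r" and eta: "\<eta> > 0"
    and W_cols: "\<And>j. (\<Sum>i\<in>UNIV. W $ i $ j) = 1"
    and rho_def: "\<rho> = onorm ((*v) (W - Jmat))" and rho_lt: "\<rho> < 1"
  shows "perp_sq (mix W (\<lambda>j. prox \<eta> r (X j - \<eta> *\<^sub>R Y j)))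
     \<le> (1 + \<rho>\<^sup>2) / 2 * perp_sq X + 2 * \<rho>\<^sup>2 * \<eta>\<^sup>2 / (1 - \<rho>\<^sup>2) * perp_sq Y"
proof -
  have "\<rho> \<ge> 0" unfolding rho_def by (rule onorm_pos_le) simp
  have "perp_sq (mix W (\<lambda>j. prox \<eta> r (X j - \<eta> *\<^sub>R Y j)))
      \<le> \<rho>\<^sup>2 * perp_sq (\<lambda>j. prox \<eta> r (X j - \<eta> *\<^sub>R Y j))"
    unfolding rho_def by (rule perp_sq_mix_le[OF W_cols])
  also have "\<dots> \<le> \<rho>\<^sup>2 * perp_sq (\<lambda>j. X j - \<eta> *\<^sub>R Y j)"
    by (intro mult_left_mono perp_sq_comp_nonexpansive_le prox_nonexpansive[OF cpc eta]) auto
  also have "\<dots> \<le> (1 + \<rho>\<^sup>2) / 2 * perp_sq X + 2 * \<rho>\<^sup>2 * \<eta>\<^sup>2 / (1 - \<rho>\<^sup>2) * perp_sq Y"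
    using \<open>\<rho> \<ge> 0\<close> rho_lt by (rule power2_mult_perp_sq_diff_scaleR_le)
  finally show ?thesis .
qed

lemma dpsgt_state_measurable:
  fixes \<xi> :: "nat \<Rightarrow> 'n::finite \<Rightarrow> 'w \<Rightarrow> 's"
    and gF :: "'n \<Rightarrow> real^'d::finite \<Rightarrow> 's \<Rightarrow> real^'d"
  assumes xi_meas: "\<And>k i. \<xi> k i \<in> measurable M (D i)"
    and gF_meas: "\<And>i. (\<lambda>(x, s). gF i x s) \<in> borel_measurable (borel \<Otimes>\<^sub>M D i)"
    and prox_meas: "prox \<eta> r \<in> borel_measurable borel"
  shows "(\<lambda>\<omega>. fst (dpsgt_state W \<eta> r gF x0 (\<lambda>k i. \<xi> k i \<omega>) t) i) \<in> borel_measurable M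
      \<and> (\<lambda>\<omega>. fst (snd (dpsgt_state W \<eta> r gF x0 (\<lambda>k i. \<xi> k i \<omega>) t)) i) \<in> borel_measurable M
      \<and> (\<lambda>\<omega>. snd (snd (dpsgt_state W \<eta> r gF x0 (\<lambda>k i. \<xi> k i \<omega>) t)) i) \<in> borel_measurable M"
proof (induction t arbitrary: i)
  case 0
  then show ?case by simp
next
  case (Suc t)
  define S where "S \<omega> = dpsgt_state W \<eta> r gF x0 (\<lambda>k i. \<xi> k i \<omega>) t" for \<omega>
  have [measurable]: "(\<lambda>\<omega>. fst (S \<omega>) i) \<in> borel_measurable M"
    "(\<lambda>\<omega>. fst (snd (S \<omega>)) i) \<in> borel_measurable M"
    "(\<lambda>\<omega>. snd (snd (S \<omega>)) i) \<in> borel_measurable M" for i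
    unfolding S_def using Suc.IH by blast+
  have [measurable]: "(\<lambda>\<omega>. gF i (fst (S \<omega>) i) (\<xi> t i \<omega>)) \<in> borel_measurable M" for i
  proof -
    have "(\<lambda>\<omega>. (fst (S \<omega>) i, \<xi> t i \<omega>)) \<in> measurable M (borel \<Otimes>\<^sub>M D i)"
      using xi_meas by (intro measurable_Pair) auto
    from measurable_compose[OF this gF_meas[of i]] show ?thesis by simp
  qed
  note prox_meas[measurable]
  show ?case unfolding dpsgt_state_Suc S_def[symmetric] Let_def mix_def by simp measurable
qed

lemma perp_sq_dpsgt_measurable:
  fixes \<xi> :: "nat \<Rightarrow> 'n::finite \<Rightarrow> 'w \<Rightarrow> 's"
    and gF :: "'n \<Rightarrow> real^'d::finite \<Rightarrow> 's \<Rightarrow> real^'d"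
  assumes "\<And>k i. \<xi> k i \<in> measurable M (D i)"
    and "\<And>i. (\<lambda>(x, s). gF i x s) \<in> borel_measurable (borel \<Otimes>\<^sub>M D i)"
    and "prox \<eta> r \<in> borel_measurable borel"
  shows "(\<lambda>\<omega>. perp_sq (dpsgt_X W \<eta> r gF x0 (\<lambda>k i. \<xi> k i \<omega>) t)) \<in> borel_measurable M"
    and "(\<lambda>\<omega>. perp_sq (dpsgt_Y W \<eta> r gF x0 (\<lambda>k i. \<xi> k i \<omega>) t)) \<in> borel_measurable M"
proof -
  note state = dpsgt_state_measurable[where \<xi> = \<xi> and gF = gF and M = M and D = D, OF assms]
  show "(\<lambda>\<omega>. perp_sq (dpsgt_X W \<eta> r gF x0 (\<lambda>k i. \<xi> k i \<omega>) t)) \<in> borel_measurable M"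
    unfolding dpsgt_X_def by (intro borel_measurable_perp_sq) (use state in blast)
  show "(\<lambda>\<omega>. perp_sq (dpsgt_Y W \<eta> r gF x0 (\<lambda>k i. \<xi> k i \<omega>) t)) \<in> borel_measurable M"
    unfolding dpsgt_Y_def by (intro borel_measurable_perp_sq) (use state in blast)
qed

theorem lemmaB2:
  fixes M :: "'w measure"
    and D :: "'n::finite \<Rightarrow> 's measure"
    and F :: "'n \<Rightarrow> real^'d::finite \<Rightarrow> 's \<Rightarrow> real"
    and gF :: "'n \<Rightarrow> real^'d \<Rightarrow> 's \<Rightarrow> real^'d"
    and f :: "'n \<Rightarrow> real^'d \<Rightarrow> real"
    and gf :: "'n \<Rightarrow> real^'d \<Rightarrow> real^'d"
    and r :: "real^'d \<Rightarrow> ereal"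
    and L \<sigma> \<eta> \<rho> :: real
    and W :: "real^'n^'n"
    and E :: "'n \<Rightarrow> 'n \<Rightarrow> bool"
    and x0 :: "'n \<Rightarrow> real^'d"
    and \<xi> :: "nat \<Rightarrow> 'n \<Rightarrow> 'w \<Rightarrow> 's"
    and t :: nat
  assumes
    \<comment> \<open>problem\<close>
    r_closed_convex: "closed_proper_convex r"
    and D_prob: "\<And>i. prob_space (D i)"
    and f_def: "\<And>i x. x \<in> edom r \<Longrightarrow> integrable (D i) (F i x) \<and> f i x = (\<integral>s. F i x s \<partial>D i)"
    and f_grad: "\<And>i x. x \<in> edom r \<Longrightarrow> (f i has_derivative (\<lambda>h. gf i x \<bullet> h)) (at x within edom r)"
    and f_smooth: "\<And>i x y. x \<in> edom r \<Longrightarrow> y \<in> edom r \<Longrightarrow> norm (gf i x - gf i y) \<le> L * norm (x - y)"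
    and phi_bdd: "\<exists>c::real. \<forall>x. ereal c \<le> ereal ((1 / real CARD('n)) * (\<Sum>i\<in>UNIV. f i x)) + r x"
    \<comment> \<open>mixing matrix on a connected graph\<close>
    and E_sym: "\<And>i j. E i j \<Longrightarrow> E j i"
    and E_conn: "\<And>i j. E\<^sup>*\<^sup>* i j"
    and W_nonneg: "\<And>i j. W $ i $ j \<ge> 0"
    and W_rows: "\<And>i. (\<Sum>j\<in>UNIV. W $ i $ j) = 1"
    and W_cols: "\<And>j. (\<Sum>i\<in>UNIV. W $ i $ j) = 1"
    and W_graph: "\<And>i j. i \<noteq> j \<Longrightarrow> \<not> E i j \<Longrightarrow> W $ i $ j = 0"
    and W_null: "\<And>v. W *v v = v \<Longrightarrow> (\<exists>c. v = (\<chi> i. c))"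
    and rho_def: "\<rho> = onorm (\<lambda>v. (W - Jmat) *v v)"
    and rho_lt: "\<rho> < 1"
    \<comment> \<open>stochastic gradients\<close>
    and gF_grad: "\<And>i x s. x \<in> edom r \<Longrightarrow> s \<in> space (D i) \<Longrightarrow>
                     ((\<lambda>z. F i z s) has_derivative (\<lambda>h. gF i x s \<bullet> h)) (at x)"
    and gF_meas: "\<And>i. (\<lambda>(x, s). gF i x s) \<in> borel_measurable (borel \<Otimes>\<^sub>M D i)"
    and gF_unbiased: "\<And>i x. x \<in> edom r \<Longrightarrow>
                        integrable (D i) (gF i x) \<and> (\<integral>s. gF i x s \<partial>D i) = gf i x"
    and gF_var: "\<And>i x. x \<in> edom r \<Longrightarrow>
                   (\<integral>\<^sup>+s. ennreal ((norm (gF i x s - gf i x))\<^sup>2) \<partial>D i) \<le> ennreal (\<sigma>\<^sup>2)"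
    and M_prob: "prob_space M"
    and xi_meas: "\<And>k i. \<xi> k i \<in> measurable M (D i)"
    and xi_dist: "\<And>k i. distr M (D i) (\<xi> k i) = D i"
    and xi_indep: "prob_space.indep_vars M (\<lambda>(k, i). D i) (\<lambda>(k, i). \<xi> k i) UNIV"
    \<comment> \<open>step size\<close>
    and eta_pos: "\<eta> > 0"
    and t_ge: "t \<ge> 1"
  shows
    "(\<integral>\<^sup>+\<omega>. ennreal (perp_sq (dpsgt_X W \<eta> r gF x0 (\<lambda>k i. \<xi> k i \<omega>) t)) \<partial>M)
     \<le> ennreal ((1 + \<rho>\<^sup>2) / 2) *
          (\<integral>\<^sup>+\<omega>. ennreal (perp_sq (dpsgt_X W \<eta> r gF x0 (\<lambda>k i. \<xi> k i \<omega>) (t - 1))) \<partial>M)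
       + ennreal (2 * \<rho>\<^sup>2 * \<eta>\<^sup>2 / (1 - \<rho>\<^sup>2)) *
          (\<integral>\<^sup>+\<omega>. ennreal (perp_sq (dpsgt_Y W \<eta> r gF x0 (\<lambda>k i. \<xi> k i \<omega>) (t - 1))) \<partial>M)"
proof -
  obtain s where t: "t = Suc s" using t_ge by (cases t) auto
  have "\<rho> \<ge> 0" unfolding rho_def by (rule onorm_pos_le) simp
  then have "\<rho>\<^sup>2 < 1" using rho_lt by (simp add: power_less_one_iff abs_of_nonneg)
  have "prox \<eta> r \<in> borel_measurable borel"
    using continuous_on_prox[OF r_closed_convex eta_pos] by (rule borel_measurable_continuous_onI)
  note meas = perp_sq_dpsgt_measurable[where \<xi> = \<xi> and gF = gF and M = M and D = D,
      OF xi_meas gF_meas this]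
  note step = perp_sq_dpsgt_step_le[OF r_closed_convex eta_pos W_cols rho_def rho_lt]
  show ?thesis unfolding t diff_Suc_1 dpsgt_X_Suc
    using \<open>\<rho>\<^sup>2 < 1\<close>
    by (intro nn_integral_le_linear_combination meas perp_sq_nonneg step) auto
qed

end
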